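(* For all $\alpha\in[-1,1]$, $1-3P(\alpha)\ge\frac{1-\alpha}{2}$, where $$P(\alpha)=\frac19+\frac{\arcsin\alpha+\arcsin\frac{\alpha}{2}}{4\pi}+\frac{(\arcsin\alpha)^2-(\arcsin\frac{\alpha}{2})^2}{4\pi^2}.$$ *)

theory Defs
  imports Complex_Main
begin

definition P :: "real \<Rightarrow> real" where
  "P \<alpha> = 1/9 + (arcsin \<alpha> + arcsin (\<alpha>/2)) / (4*pi)
          + ((arcsin \<alpha>)^2 - (arcsin (\<alpha>/2))^2) / (4*pi^2)"

end

theory Submission
  imports Defs "HOL-Analysis.Complex_Transcendental"
begin

text \<open>
  With \<open>a = arcsin \<alpha>\<close> and \<open>b = arcsin (\<alpha>/2)\<close>, multiplying by \<open>4\<pi>\<^sup>2/3\<close> turns the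
  claim into \<open>(a + \<pi>/2)\<^sup>2 - (\<pi>/2 - b)\<^sup>2 \<le> 2\<pi>\<^sup>2/9 \<cdot> (1 + 3\<alpha>)\<close>, an inequality that is
  sharp at both ends \<open>\<alpha> = \<plusminus>1\<close>. On each half of \<open>[-1, 1]\<close> the angle \<open>\<pi>/2 - b\<close> is
  bounded below by a line through its endpoint value \<open>2\<pi>/3\<close> resp. \<open>\<pi>/3\<close>, and the angle
  \<open>a + \<pi>/2\<close> resp. \<open>\<pi>/2 - a\<close>, whose cosine is \<open>-\<alpha>\<close> resp. \<open>\<alpha>\<close>, is controlled
  quadratically by \<open>1 + \<alpha>\<close> resp. \<open>1 - \<alpha>\<close> by Taylor bounds on \<open>1 - cos\<close>.
  What remains is a polynomial inequality needing only rough bounds on \<open>\<pi>\<close>.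
\<close>

lemma sin_ge_cubic:
  fixes x :: real
  assumes "0 \<le> x"
  shows "x - x^3/6 \<le> sin x"
proof -
  have "\<bar>sin x - (\<Sum>m<3. sin_coeff m * x ^ m)\<bar> \<le> inverse (fact 3) * \<bar>x\<bar> ^ 3"
    by (rule Maclaurin_sin_bound)
  then have "\<bar>sin x - x\<bar> \<le> x^3/6"
    using assms by (simp add: eval_nat_numeral sin_coeff_def inverse_eq_divide)
  then show ?thesis by linarith
qed

lemma one_minus_cos_le: "1 - cos x \<le> x^2/2" for x :: real
proof -
  have "sin (x/2) ^ 2 \<le> (x/2)^2"
    using abs_sin_x_le_abs_x[of "x/2"] by (simp only: abs_le_square_iff)
  then show ?thesis using cos_double_sin[of "x/2"] by (simp add: power2_eq_square)
qed

lemma one_minus_cos_ge: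
  fixes x :: real
  assumes "0 \<le> x" "x \<le> 2"
  shows "x^2/3 \<le> 1 - cos x"
proof -
  have "5/12 * x \<le> x/2 - (x/2)^3/6"
  proof -
    have "x * (x * x) \<le> x * 4"
      using assms mult_mono[of x 2 x 2] by (intro mult_left_mono) auto
    then show ?thesis by (simp add: power3_eq_cube)
  qed
  also have "\<dots> \<le> sin (x/2)" using assms by (intro sin_ge_cubic) simp
  finally have "(5/12 * x)^2 \<le> sin (x/2) ^ 2" using assms by (intro power_mono) simp_all
  moreover have "1 - cos x = 2 * sin (x/2) ^ 2" using cos_double_sin[of "x/2"] by simp
  moreover have "(5/12 * x)^2 = 25/144 * x^2" by (simp add: power2_eq_square)
  ultimately show ?thesis using zero_le_power2[of x] by linarith
qed

lemma arcsin_half_le_nonpos: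
  fixes \<alpha> :: real
  assumes "-1 \<le> \<alpha>" "\<alpha> \<le> 0"
  shows "arcsin (\<alpha>/2) \<le> 2/3 * (1 + \<alpha>) - pi/6"
proof -
  define d where "d = 2/3 * (1 + \<alpha>)"
  have d: "0 \<le> d" "d \<le> 2/3" using assms by (auto simp: d_def)
  have "17/10 \<le> sqrt 3" by (rule real_le_rsqrt) (simp add: power2_eq_square)
  moreover have "25/27 * d \<le> sin d"
  proof -
    have "25/27 * d \<le> d - d^3/6"
      using d mult_mono[of d "2/3" d "2/3"] mult_right_mono[of "d*d" "4/9" d]
      by (simp add: power3_eq_cube)
    also have "\<dots> \<le> sin d" using d by (intro sin_ge_cubic)
    finally show ?thesis .
  qed
  ultimately have "17/10 * (25/27 * d) \<le> sqrt 3 * sin d"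
    using d by (intro mult_mono) auto
  moreover have "sin (d - pi/6) = sqrt 3 / 2 * sin d - cos d / 2"
    by (simp add: sin_diff sin_30 cos_30)
  moreover have "\<alpha>/2 = 3/4 * d - 1/2" by (simp add: d_def field_simps)
  ultimately have "\<alpha>/2 \<le> sin (d - pi/6)"
    using cos_le_one[of d] d by linarith
  moreover have "-(pi/2) \<le> d - pi/6" "d - pi/6 \<le> pi/2" using d pi_gt3 by simp_all
  ultimately have "arcsin (\<alpha>/2) \<le> d - pi/6" using assms by (subst arcsin_le_iff) auto
  then show ?thesis by (simp add: d_def)
qed

lemma arcsin_half_le_nonneg:
  fixes \<alpha> :: real
  assumes "0 \<le> \<alpha>" "\<alpha> \<le> 1"
  shows "arcsin (\<alpha>/2) \<le> pi/6 - (1 - \<alpha>)/2"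
proof -
  define e where "e = (1 - \<alpha>)/2"
  have e: "0 \<le> e" "e \<le> 1/2" using assms by (auto simp: e_def)
  have "sqrt 3 \<le> 7/4" by (rule real_le_lsqrt) (simp_all add: power2_eq_square)
  moreover have "0 \<le> sin e" "sin e \<le> e" using e pi_gt3 by (auto intro: sin_ge_zero sin_x_le_x)
  ultimately have "sqrt 3 * sin e \<le> 7/4 * e" using e by (intro mult_mono) auto
  moreover have "1 - cos e \<le> e/4"
    using one_minus_cos_le[of e] mult_left_mono[OF e(2) e(1)] by (simp add: power2_eq_square)
  moreover have "sin (pi/6 - e) = cos e / 2 - sqrt 3 / 2 * sin e"
    by (simp add: sin_diff sin_30 cos_30)
  moreover have "\<alpha>/2 = 1/2 - e" by (simp add: e_def field_simps)
  ultimately have "\<alpha>/2 \<le> sin (pi/6 - e)" using e by linarith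
  moreover have "-(pi/2) \<le> pi/6 - e" "pi/6 - e \<le> pi/2" using e pi_gt3 by simp_all
  ultimately have "arcsin (\<alpha>/2) \<le> pi/6 - e" using assms by (subst arcsin_le_iff) auto
  then show ?thesis by (simp add: e_def)
qed

lemma arcsin_gap_le_nonpos:
  fixes \<alpha> :: real
  assumes "-1 \<le> \<alpha>" "\<alpha> \<le> 0"
  shows "(arcsin \<alpha> + pi/2)^2 - (pi/2 - arcsin (\<alpha>/2))^2 \<le> 2*pi^2/9 * (1 + 3*\<alpha>)"
proof -
  define \<phi> where "\<phi> = arcsin \<alpha> + pi/2"
  define y where "y = 1 + \<alpha>"
  have y: "0 \<le> y" "y \<le> 1" using assms by (auto simp: y_def)
  have "0 \<le> \<phi>" "\<phi> \<le> pi/2"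
    using arcsin_bounded[of \<alpha>] arcsin_le_arcsin[of \<alpha> 0] assms by (auto simp: \<phi>_def)
  moreover have "cos \<phi> = -\<alpha>" using assms by (simp add: \<phi>_def cos_add)
  ultimately have \<phi>_sq: "\<phi>^2 \<le> 3 * y"
    using one_minus_cos_ge[of \<phi>] pi_half_less_two by (simp add: y_def)
  have "2*pi/3 - 2/3 * y \<le> pi/2 - arcsin (\<alpha>/2)"
    using arcsin_half_le_nonpos[OF assms] by (simp add: y_def)
  moreover have "0 \<le> 2*pi/3 - 2/3 * y" using y pi_gt3 by simp
  ultimately have arccos_sq: "(2*pi/3 - 2/3 * y)^2 \<le> (pi/2 - arcsin (\<alpha>/2))^2"
    by (intro power_mono)
  have "3 \<le> 2*pi^2/3 - 8*pi/9"
    using pi_gt3 pi_approx(2) mult_strict_mono[of 3 pi 3 pi] by (simp add: power2_eq_square)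
  then have "3 * y \<le> (2*pi^2/3 - 8*pi/9) * y" using y by (intro mult_right_mono)
  moreover have "2*pi^2/9 * (1 + 3*\<alpha>) - (\<phi>^2 - (2*pi/3 - 2/3 * y)^2)
      = (2*pi^2/3 - 8*pi/9) * y + 4/9 * y^2 - \<phi>^2"
    by (simp add: y_def power2_eq_square field_simps)
  ultimately show ?thesis
    using \<phi>_sq arccos_sq zero_le_power2[of y] unfolding \<phi>_def by linarith
qed

lemma arcsin_gap_le_nonneg:
  fixes \<alpha> :: real
  assumes "0 \<le> \<alpha>" "\<alpha> \<le> 1"
  shows "(arcsin \<alpha> + pi/2)^2 - (pi/2 - arcsin (\<alpha>/2))^2 \<le> 2*pi^2/9 * (1 + 3*\<alpha>)"
proof -
  define \<psi> where "\<psi> = pi/2 - arcsin \<alpha>"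
  define v where "v = 1 - \<alpha>"
  define c where "c = 2*pi^2/3 - pi/3"
  have \<psi>: "0 \<le> \<psi>" "\<psi> \<le> pi/2"
    using arcsin_bounded[of \<alpha>] arcsin_le_arcsin[of 0 \<alpha>] assms by (auto simp: \<psi>_def)
  have "cos \<psi> = \<alpha>" using assms by (simp add: \<psi>_def cos_diff)
  then have v_le: "v \<le> \<psi>^2/2" using one_minus_cos_le[of \<psi>] by (simp add: v_def)
  have c: "0 \<le> c" "c \<le> 6"
    using pi_gt3 pi_approx(2) mult_mono[of pi "16/5" pi "16/5"] by (auto simp: c_def power2_eq_square)
  have "pi/3 + v/2 \<le> pi/2 - arcsin (\<alpha>/2)"
    using arcsin_half_le_nonneg[OF assms] by (simp add: v_def)
  moreover have "0 \<le> pi/3 + v/2" using assms by (simp add: v_def)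
  ultimately have arccos_sq: "(pi/3 + v/2)^2 \<le> (pi/2 - arcsin (\<alpha>/2))^2"
    by (intro power_mono)
  have "\<psi>^2 + c * v \<le> \<psi>^2 * (1 + c/2)"
    using mult_left_mono[OF v_le c(1)] by (simp add: algebra_simps)
  also have "\<dots> \<le> \<psi>^2 * 4" using c by (intro mult_left_mono) auto
  also have "\<dots> \<le> 2*pi*\<psi>"
    using \<psi> mult_left_mono[of "2*\<psi>" pi \<psi>] by (simp add: power2_eq_square algebra_simps)
  finally have "\<psi>^2 + c * v \<le> 2*pi*\<psi>" .
  moreover have "2*pi^2/9 * (1 + 3*\<alpha>) - ((pi - \<psi>)^2 - (pi/3 + v/2)^2)
      = 2*pi*\<psi> - \<psi>^2 - c * v + v^2/4"
    by (simp add: v_def c_def power2_eq_square field_simps)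
  moreover have "(arcsin \<alpha> + pi/2)^2 = (pi - \<psi>)^2" by (simp add: \<psi>_def add.commute)
  ultimately show ?thesis using arccos_sq zero_le_power2[of v] by linarith
qed

lemma one_minus_three_P_eq:
  "1 - 3 * P \<alpha> - (1 - \<alpha>)/2 = 3 / (4*pi^2)
     * (2*pi^2/9 * (1 + 3*\<alpha>) - ((arcsin \<alpha> + pi/2)^2 - (pi/2 - arcsin (\<alpha>/2))^2))"
  unfolding P_def by (simp add: field_simps power2_eq_square)

theorem mainTheorem10:
  fixes \<alpha> :: real
  assumes "-1 \<le> \<alpha>" and "\<alpha> \<le> 1"
  shows "1 - 3 * P \<alpha> \<ge> (1 - \<alpha>) / 2"
proof -
  have "(arcsin \<alpha> + pi/2)^2 - (pi/2 - arcsin (\<alpha>/2))^2 \<le> 2*pi^2/9 * (1 + 3*\<alpha>)"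
    using assms arcsin_gap_le_nonpos arcsin_gap_le_nonneg by (cases "\<alpha> \<le> 0") auto
  then have "0 \<le> 1 - 3 * P \<alpha> - (1 - \<alpha>)/2"
    unfolding one_minus_three_P_eq by (intro mult_nonneg_nonneg) auto
  then show ?thesis by simp
qed

end
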